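(* Let $t\ge 1$ be an integer, $\alpha>0$, and let $\mathcal{P}$ be a non-empty $\alpha$-rich collection of paths of length $2t-2$ (i.e. with $2t-1$ vertices) in a graph $G$. If $\alpha\ge t^2$, then $G$ contains a copy of $F_{t,t}$.
   Context: For $\alpha>0$ and $k\in\mathbb{N}$, a collection $\mathcal{P}$ of labelled paths $x_1x_2\cdots x_k$ (with distinct vertices) in $G$ is $\alpha$-rich if for every $x_1x_2\cdots x_k\in\mathcal{P}$ and every $2\le i\le k-1$ there exist at least $\alpha$ distinct vertices $x_i'$ such that $x_1\cdots x_{i-1}x_i'x_{i+1}\cdots x_k\in\mathcal{P}$. The grid $F_{t,t}$ has vertex set $[t]\times[t]$, two vertices being adjacent iff they differ in exactly one coordinate and there by exactly one. *)

theory Defs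
  imports Main "HOL-Library.Extended_Real"
begin

definition graph :: "'a set \<Rightarrow> ('a \<Rightarrow> 'a \<Rightarrow> bool) \<Rightarrow> bool" where
  "graph V E \<longleftrightarrow> finite V \<and> (\<forall>x y. E x y \<longrightarrow> x \<in> V \<and> y \<in> V \<and> x \<noteq> y \<and> E y x)"

definition is_path :: "'a set \<Rightarrow> ('a \<Rightarrow> 'a \<Rightarrow> bool) \<Rightarrow> nat \<Rightarrow> 'a list \<Rightarrow> bool" where
  "is_path V E k p \<longleftrightarrow> length p = k \<and> distinct p \<and> set p \<subseteq> V \<and>
     (\<forall>i. i + 1 < k \<longrightarrow> E (p ! i) (p ! (i + 1)))"

text \<open>alpha-rich: positions 2..k-1 (1-indexed), i.e. 1..k-2 (0-indexed).
  The number of alternatives is counted as an extended natural so that infinitely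
  many alternatives also count as "at least alpha".\<close>
definition rich :: "real \<Rightarrow> nat \<Rightarrow> 'a list set \<Rightarrow> bool" where
  "rich \<alpha> k P \<longleftrightarrow> (\<forall>p\<in>P. \<forall>i. 1 \<le> i \<and> i + 2 \<le> k \<longrightarrow>
       ereal \<alpha> \<le> (if finite {v. p[i := v] \<in> P} then ereal (real (card {v. p[i := v] \<in> P})) else \<infinity>))"

definition grid_adj :: "nat \<times> nat \<Rightarrow> nat \<times> nat \<Rightarrow> bool" where
  "grid_adj u v \<longleftrightarrow> (fst u = fst v \<and> (snd u = snd v + 1 \<or> snd v = snd u + 1)) \<or>
                     (snd u = snd v \<and> (fst u = fst v + 1 \<or> fst v = fst u + 1))"

definition contains_grid :: "'a set \<Rightarrow> ('a \<Rightarrow> 'a \<Rightarrow> bool) \<Rightarrow> nat \<Rightarrow> bool" where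
  "contains_grid V E t \<longleftrightarrow> (\<exists>f. inj_on f ({1..t} \<times> {1..t}) \<and> f ` ({1..t} \<times> {1..t}) \<subseteq> V \<and>
     (\<forall>u\<in>{1..t} \<times> {1..t}. \<forall>v\<in>{1..t} \<times> {1..t}. grid_adj u v \<longrightarrow> E (f u) (f v)))"

end

theory Submission
  imports Defs
begin

text \<open>The grid is built one vertex at a time. At every stage a staircase-shaped part of the grid
  is embedded, and its lower-right boundary, a monotone lattice path from (1,1) to (t,t) with
  2t-1 vertices, is mapped onto a path of \<open>\<P>\<close>. Flipping one corner of the boundary changes a
  single interior vertex of that path; richness offers at least \<open>t\<^sup>2\<close> replacements, while fewer
  than \<open>t\<^sup>2\<close> vertices are already used, so some replacement is new. The two path edges at the
  replaced vertex are exactly the grid edges of the new cell, so the embedding grows.\<close>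

text \<open>\<open>stair_region t r c\<close> consists of the rows above row \<open>r\<close>, the cells of row \<open>r\<close> right of
  column \<open>c\<close>, and the last column; \<open>stair_path t r c k\<close> is the \<open>k\<close>-th vertex of its lower-right
  boundary, which lies on the anti-diagonal \<open>a + b = k + 2\<close>.\<close>

definition stair_region :: "nat \<Rightarrow> nat \<Rightarrow> nat \<Rightarrow> (nat \<times> nat) set" where
  "stair_region t r c =
     {(a, b). a \<in> {1..t} \<and> b \<in> {1..t} \<and> (a < r \<or> (a = r \<and> c < b) \<or> b = t)}"

definition stair_path :: "nat \<Rightarrow> nat \<Rightarrow> nat \<Rightarrow> nat \<Rightarrow> nat \<times> nat" where
  "stair_path t r c k =
     (if k + 2 \<le> r then (k + 1, 1)
      else if k + 2 \<le> r + c then (r - 1, k + 3 - r)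
      else if k + 2 \<le> r + t then (r, k + 2 - r)
      else (k + 2 - t, t))"

lemma stair_region_subset_grid: "stair_region t r c \<subseteq> {1..t} \<times> {1..t}"
  by (auto simp: stair_region_def)

lemma corner_notin_stair_region: "c \<le> t - 1 \<Longrightarrow> (r, c) \<notin> stair_region t r c"
  by (auto simp: stair_region_def)

lemma stair_region_flip:
  "1 \<le> c \<Longrightarrow> c \<le> t - 1 \<Longrightarrow> 1 \<le> r \<Longrightarrow> r \<le> t \<Longrightarrow>
    stair_region t r (c - 1) = insert (r, c) (stair_region t r c)"
  by (auto simp: stair_region_def)

lemma stair_region_next_row: "1 \<le> t \<Longrightarrow> stair_region t r 0 = stair_region t (Suc r) (t - 1)"
  by (auto simp: stair_region_def)

lemma stair_region_last_row: "stair_region t (t + 1) (t - 1) = {1..t} \<times> {1..t}"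
  by (auto simp: stair_region_def)

lemma stair_region_hook:
  "stair_region t 2 (t - 1) = {u \<in> {1..t} \<times> {1..t}. fst u = 1 \<or> snd u = t}"
  by (auto simp: stair_region_def)

lemma stair_path_in_region:
  "2 \<le> r \<Longrightarrow> r \<le> t \<Longrightarrow> c \<le> t - 1 \<Longrightarrow> k < 2 * t - 1 \<Longrightarrow> stair_path t r c k \<in> stair_region t r c"
  by (auto simp: stair_path_def stair_region_def)

lemma stair_path_antidiagonal:
  "2 \<le> r \<Longrightarrow> fst (stair_path t r c k) + snd (stair_path t r c k) = k + 2"
  by (auto simp: stair_path_def)

lemma stair_path_next_row: "1 \<le> t \<Longrightarrow> stair_path t r 0 = stair_path t (Suc r) (t - 1)"
  by (rule ext) (auto simp: stair_path_def)

lemma stair_path_flip_away: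
  "k \<noteq> r + c - 2 \<Longrightarrow> 1 \<le> c \<Longrightarrow> 2 \<le> r \<Longrightarrow> stair_path t r (c - 1) k = stair_path t r c k"
  by (auto simp: stair_path_def)

lemma stair_path_flip_corner:
  "1 \<le> c \<Longrightarrow> c \<le> t - 1 \<Longrightarrow> 2 \<le> r \<Longrightarrow> stair_path t r (c - 1) (r + c - 2) = (r, c)"
  by (auto simp: stair_path_def)

lemma stair_path_flip_before:
  "1 \<le> c \<Longrightarrow> c \<le> t - 1 \<Longrightarrow> 2 \<le> r \<Longrightarrow> stair_path t r (c - 1) (r + c - 3) = (r - 1, c)"
  by (auto simp: stair_path_def)

lemma stair_path_flip_after:
  "1 \<le> c \<Longrightarrow> c \<le> t - 1 \<Longrightarrow> 2 \<le> r \<Longrightarrow> stair_path t r (c - 1) (r + c - 1) = (r, c + 1)"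
  by (auto simp: stair_path_def)

lemma map_stair_path_flip:
  assumes r: "2 \<le> r" "r \<le> t" and c: "1 \<le> c" "c \<le> t - 1"
  shows "map (f((r, c) := v) \<circ> stair_path t r (c - 1)) [0..<2 * t - 1] =
    (map (f \<circ> stair_path t r c) [0..<2 * t - 1])[r + c - 2 := v]"
proof (rule nth_equalityI)
  fix k assume "k < length (map (f((r, c) := v) \<circ> stair_path t r (c - 1)) [0..<2 * t - 1])"
  then have k: "k < 2 * t - 1"
    by simp
  show "map (f((r, c) := v) \<circ> stair_path t r (c - 1)) [0..<2 * t - 1] ! k =
    (map (f \<circ> stair_path t r c) [0..<2 * t - 1])[r + c - 2 := v] ! k"
  proof (cases "k = r + c - 2")
    case True
    then show ?thesis
      using k stair_path_flip_corner[OF c r(1)] by simp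
  next
    case False
    have "stair_path t r c k \<noteq> (r, c)"
      using stair_path_in_region[OF r c(2) k] corner_notin_stair_region[OF c(2)] by metis
    then show ?thesis
      using False k stair_path_flip_away[OF False c(1) r(1)] by simp
  qed
qed simp

lemma grid_adj_sym: "grid_adj u w \<Longrightarrow> grid_adj w u"
  by (auto simp: grid_adj_def)

lemma grid_adj_antidiagonal:
  "grid_adj u w \<Longrightarrow> fst w + snd w = fst u + snd u + 1 \<or> fst u + snd u = fst w + snd w + 1"
  by (auto simp: grid_adj_def)

lemma grid_adj_corner_in_stair_region:
  "x \<in> stair_region t r c \<Longrightarrow> grid_adj (r, c) x \<Longrightarrow> c \<le> t - 1 \<Longrightarrow> x = (r - 1, c) \<or> x = (r, c + 1)"
  by (cases x) (auto simp: stair_region_def grid_adj_def)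

definition grid_embedding ::
    "'a set \<Rightarrow> ('a \<Rightarrow> 'a \<Rightarrow> bool) \<Rightarrow> (nat \<times> nat) set \<Rightarrow> (nat \<times> nat \<Rightarrow> 'a) \<Rightarrow> bool" where
  "grid_embedding V E D f \<longleftrightarrow>
     inj_on f D \<and> f ` D \<subseteq> V \<and> (\<forall>u\<in>D. \<forall>w\<in>D. grid_adj u w \<longrightarrow> E (f u) (f w))"

lemma contains_grid_iff_grid_embedding:
  "contains_grid V E t \<longleftrightarrow> (\<exists>f. grid_embedding V E ({1..t} \<times> {1..t}) f)"
  by (simp add: contains_grid_def grid_embedding_def)

lemma card_image_stair_region_less:
  assumes "1 \<le> r" "r \<le> t" "1 \<le> c" "c \<le> t - 1"
  shows "card (f ` stair_region t r c) < t ^ 2"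
proof -
  have "stair_region t r c \<subset> {1..t} \<times> {1..t}"
    using stair_region_subset_grid corner_notin_stair_region assms by fastforce
  then have "card (stair_region t r c) < t ^ 2"
    using psubset_card_mono[of "{1..t} \<times> {1..t}"] by (simp add: card_cartesian_product power2_eq_square)
  moreover have "card (f ` stair_region t r c) \<le> card (stair_region t r c)"
    using finite_subset[OF stair_region_subset_grid] by (simp add: card_image_le)
  ultimately show ?thesis
    by linarith
qed

lemma graph_edge_sym: "graph V E \<Longrightarrow> E x y \<Longrightarrow> E y x"
  by (auto simp: graph_def)

lemma grid_embedding_insert:
  assumes G: "graph V E" and f: "grid_embedding V E D f"
    and x: "x \<notin> D" and v: "v \<in> V" "v \<notin> f ` D"
    and nbrs: "\<And>y. y \<in> D \<Longrightarrow> grid_adj x y \<Longrightarrow> E v (f y)"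
  shows "grid_embedding V E (insert x D) (f(x := v))"
proof -
  have "inj_on (f(x := v)) (insert x D)"
    using f v x by (auto simp: grid_embedding_def fun_upd_image inj_on_fun_updI)
  moreover have "(f(x := v)) ` insert x D \<subseteq> V"
    using f v x by (auto simp: grid_embedding_def)
  moreover have "E ((f(x := v)) u) ((f(x := v)) w)"
    if u: "u \<in> insert x D" and w: "w \<in> insert x D" and uw: "grid_adj u w" for u w
  proof -
    have "u \<noteq> w"
      using uw by (auto simp: grid_adj_def)
    then consider "u = x" "w \<in> D" | "w = x" "u \<in> D" | "u \<in> D" "w \<in> D"
      using u w by auto
    then show ?thesis
    proof cases
      case 1
      then show ?thesis using nbrs uw x by auto
    next
      case 2
      then show ?thesis using nbrs[of u] grid_adj_sym[OF uw] graph_edge_sym[OF G] x by auto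
    next
      case 3
      then show ?thesis using f uw x by (auto simp: grid_embedding_def)
    qed
  qed
  ultimately show ?thesis
    by (simp add: grid_embedding_def)
qed

lemma is_path_map_upt_vertex: "is_path V E n (map h [0..<n]) \<Longrightarrow> k < n \<Longrightarrow> h k \<in> V"
  by (auto simp: is_path_def)

lemma is_path_map_upt_edge: "is_path V E n (map h [0..<n]) \<Longrightarrow> k + 1 < n \<Longrightarrow> E (h k) (h (k + 1))"
  unfolding is_path_def by (metis add_lessD1 diff_zero length_upt nth_map nth_upt plus_nat.add_0)

lemma rich_avoid:
  assumes "rich \<alpha> k P" "p \<in> P" "1 \<le> i" "i + 2 \<le> k" "finite S" "real (card S) < \<alpha>"
  obtains v where "p[i := v] \<in> P" "v \<notin> S"
proof -
  have "\<not> {v. p[i := v] \<in> P} \<subseteq> S"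
  proof
    assume sub: "{v. p[i := v] \<in> P} \<subseteq> S"
    then have "finite {v. p[i := v] \<in> P}"
      using assms(5) finite_subset by blast
    moreover have "card {v. p[i := v] \<in> P} \<le> card S"
      using sub assms(5) by (rule card_mono[rotated])
    ultimately show False
      using assms unfolding rich_def by fastforce
  qed
  then show thesis
    using that by blast
qed

definition stair_embedding ::
    "'a set \<Rightarrow> ('a \<Rightarrow> 'a \<Rightarrow> bool) \<Rightarrow> 'a list set \<Rightarrow> nat \<Rightarrow> nat \<Rightarrow> nat \<Rightarrow> (nat \<times> nat \<Rightarrow> 'a) \<Rightarrow> bool"
  where
  "stair_embedding V E P t r c f \<longleftrightarrow>
     grid_embedding V E (stair_region t r c) f \<and> map (f \<circ> stair_path t r c) [0..<2 * t - 1] \<in> P"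

lemma stair_embedding_next_row:
  "1 \<le> t \<Longrightarrow> stair_embedding V E P t r 0 f \<longleftrightarrow> stair_embedding V E P t (Suc r) (t - 1) f"
  by (simp add: stair_embedding_def stair_region_next_row stair_path_next_row)

locale rich_grid_setting =
  fixes V :: "'a set" and E :: "'a \<Rightarrow> 'a \<Rightarrow> bool" and t :: nat and \<alpha> :: real and P :: "'a list set"
  assumes graph: "graph V E" and t_pos: "1 \<le> t"
    and paths: "\<forall>p\<in>P. is_path V E (2 * t - 1) p"
    and rich: "rich \<alpha> (2 * t - 1) P" and alpha_ge: "real t ^ 2 \<le> \<alpha>"
begin

text \<open>The hook (first row and last column) meets every anti-diagonal once, so any path of \<open>\<P>\<close>
  embeds it.\<close>

lemma stair_embedding_hook:
  assumes "P \<noteq> {}"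
  shows "\<exists>f. stair_embedding V E P t 2 (t - 1) f"
proof -
  define n where "n = 2 * t - 1"
  obtain p where pP: "p \<in> P"
    using assms by blast
  then have p: "is_path V E n p"
    using paths by (simp add: n_def)
  define lv where "lv u = fst u + snd u - 2" for u :: "nat \<times> nat"
  define f where "f u = p ! lv u" for u
  define H where "H = {u \<in> {1..t} \<times> {1..t}. fst u = 1 \<or> snd u = t}"
  have lv_less: "lv u < length p" if "u \<in> H" for u
    using that p by (auto simp: H_def lv_def n_def is_path_def)
  have lv_inj: "inj_on lv H"
    by (auto simp: inj_on_def H_def lv_def)
  have "inj_on f H"
    using p lv_inj lv_less by (auto simp: inj_on_def f_def is_path_def nth_eq_iff_index_eq)
  moreover have "f ` H \<subseteq> V"
    using p lv_less by (auto simp: f_def is_path_def)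
  moreover have "E (f u) (f w)" if "u \<in> H" "w \<in> H" "grid_adj u w" for u w
  proof -
    have "lv w = lv u + 1 \<or> lv u = lv w + 1"
      using grid_adj_antidiagonal[OF that(3)] that(1,2) by (auto simp: H_def lv_def)
    then show ?thesis
      using p lv_less[OF that(1)] lv_less[OF that(2)] graph_edge_sym[OF graph]
      by (auto simp: f_def is_path_def)
  qed
  moreover have "map (f \<circ> stair_path t 2 (t - 1)) [0..<n] = p"
    using p stair_path_antidiagonal[of 2 t "t - 1"]
    by (intro nth_equalityI) (auto simp: f_def lv_def is_path_def)
  ultimately show ?thesis
    using pP unfolding stair_embedding_def stair_region_hook grid_embedding_def H_def n_def by auto
qed

lemma stair_embedding_flip:
  assumes emb: "stair_embedding V E P t r c f"
    and r: "2 \<le> r" "r \<le> t" and c: "1 \<le> c" "c \<le> t - 1"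
  shows "\<exists>g. stair_embedding V E P t r (c - 1) g"
proof -
  define D where "D = stair_region t r c"
  define i where "i = r + c - 2"
  define p where "p = map (f \<circ> stair_path t r c) [0..<2 * t - 1]"
  have pP: "p \<in> P" and f: "grid_embedding V E D f"
    using emb by (simp_all add: stair_embedding_def p_def D_def)
  have i: "1 \<le> i" "i + 2 \<le> 2 * t - 1"
    using r c by (auto simp: i_def)
  have "card (f ` D) < t ^ 2"
    using card_image_stair_region_less[of r t c f] r c by (simp add: D_def)
  then have "real (card (f ` D)) < \<alpha>"
    using alpha_ge by (metis of_nat_less_iff of_nat_power order_less_le_trans)
  then obtain v where vP: "p[i := v] \<in> P" and v_new: "v \<notin> f ` D"
    using rich_avoid[OF rich pP i] finite_subset[OF stair_region_subset_grid] unfolding D_def by blast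
  define g where "g = f((r, c) := v)"
  define h where "h = g \<circ> stair_path t r (c - 1)"
  have h_eq: "map h [0..<2 * t - 1] = p[i := v]"
    using map_stair_path_flip[OF r c] by (simp add: h_def g_def p_def i_def)
  then have h_path: "is_path V E (2 * t - 1) (map h [0..<2 * t - 1])"
    using paths vP by simp
  have idx: "i - 1 = r + c - 3" "i + 1 = r + c - 1"
    using r c by (simp_all add: i_def)
  have h_corner: "h i = v"
    using stair_path_flip_corner[OF c r(1)] by (simp add: h_def g_def i_def)
  have h_before: "h (i - 1) = f (r - 1, c)"
    unfolding idx using stair_path_flip_before[OF c r(1)] r by (auto simp: h_def g_def)
  have h_after: "h (i + 1) = f (r, c + 1)"
    unfolding idx using stair_path_flip_after[OF c r(1)] by (auto simp: h_def g_def)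
  have "v \<in> V"
    using is_path_map_upt_vertex[OF h_path, of i] i h_corner by simp
  moreover have "E v (f y)" if "y \<in> D" "grid_adj (r, c) y" for y
  proof -
    have "y = (r - 1, c) \<or> y = (r, c + 1)"
      using grid_adj_corner_in_stair_region that c by (auto simp: D_def)
    moreover have "E (f (r - 1, c)) v"
      using is_path_map_upt_edge[OF h_path, of "i - 1"] i h_corner h_before by simp
    moreover have "E v (f (r, c + 1))"
      using is_path_map_upt_edge[OF h_path, of i] i h_corner h_after by simp
    ultimately show ?thesis
      using graph_edge_sym[OF graph] by auto
  qed
  moreover have "(r, c) \<notin> D"
    using c by (simp add: D_def corner_notin_stair_region)
  ultimately have "grid_embedding V E (stair_region t r (c - 1)) g"
    using grid_embedding_insert[OF graph f _ _ v_new] stair_region_flip[of c t r] r c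
    by (simp add: g_def D_def)
  then show ?thesis
    using vP h_eq by (auto simp: stair_embedding_def h_def)
qed

lemma stair_embedding_sweep_row:
  "stair_embedding V E P t r c f \<Longrightarrow> 2 \<le> r \<Longrightarrow> r \<le> t \<Longrightarrow> c \<le> t - 1 \<Longrightarrow>
    \<exists>g. stair_embedding V E P t r 0 g"
proof (induction c arbitrary: f)
  case (Suc c)
  then obtain g where "stair_embedding V E P t r c g"
    using stair_embedding_flip[of r "Suc c" f] by auto
  with Suc show ?case
    by simp
qed auto

lemma stair_embedding_rows:
  assumes "P \<noteq> {}"
  shows "2 \<le> r \<Longrightarrow> r \<le> t + 1 \<Longrightarrow> \<exists>f. stair_embedding V E P t r (t - 1) f"
proof (induction r rule: dec_induct)
  case base
  then show ?case
    using stair_embedding_hook[OF assms] by simp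
next
  case (step r)
  then show ?case
    using stair_embedding_sweep_row stair_embedding_next_row[OF t_pos] by fastforce
qed

end

theorem proposition3p3:
  fixes V :: "'a set" and E :: "'a \<Rightarrow> 'a \<Rightarrow> bool" and t :: nat and \<alpha> :: real
    and P :: "'a list set"
  assumes "graph V E" and "t \<ge> 1" and "\<alpha> > 0"
    and "P \<noteq> {}" and "\<forall>p\<in>P. is_path V E (2 * t - 1) p"
    and "rich \<alpha> (2 * t - 1) P"
    and "\<alpha> \<ge> real t ^ 2"
  shows "contains_grid V E t"
proof -
  interpret rich_grid_setting V E t \<alpha> P
    using assms by unfold_locales auto
  obtain f where "stair_embedding V E P t (t + 1) (t - 1) f"
    using stair_embedding_rows[OF \<open>P \<noteq> {}\<close>, of "t + 1"] \<open>t \<ge> 1\<close> by auto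
  then have "grid_embedding V E ({1..t} \<times> {1..t}) f"
    unfolding stair_embedding_def stair_region_last_row by blast
  then show ?thesis
    unfolding contains_grid_iff_grid_embedding by blast
qed

end
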